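(* Let $-1<D<C\le 1$ and let $\alpha_1,\alpha_2>0$ satisfy $$(\alpha_1-\alpha_2)(1-D^2)\ \ge\ e\,(C-D)(1+|D|).$$ Let $p$ be analytic in $\mathbb{D}$ with $p(0)=1$. If $$1+\alpha_1 z p'(z)+\alpha_2 z^2 p''(z)\prec \frac{1+Cz}{1+Dz}\qquad (z\in\mathbb{D}),$$ then $p(z)\prec e^z$.
   Context: $\mathbb{D}=\{z\in\mathbb{C}:|z|<1\}$. For functions $g,h$ analytic in $\mathbb{D}$, $g\prec h$ ($g$ is subordinate to $h$) means there is an analytic $w:\mathbb{D}\to\mathbb{D}$ with $w(0)=0$ and $g=h\circ w$; when $h$ is univalent this is equivalent to $g(0)=h(0)$ and $g(\mathbb{D})\subseteq h(\mathbb{D})$. *)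

theory Defs
  imports "HOL-Complex_Analysis.Complex_Analysis"
begin

definition unit_disc :: "complex set" where
  "unit_disc = ball 0 1"

definition subordinate :: "(complex \<Rightarrow> complex) \<Rightarrow> (complex \<Rightarrow> complex) \<Rightarrow> bool"
  (infix "\<prec>\<^sub>s" 50) where
  "g \<prec>\<^sub>s h \<longleftrightarrow> (\<exists>w. w holomorphic_on unit_disc \<and> w ` unit_disc \<subseteq> unit_disc \<and> w 0 = 0
                  \<and> (\<forall>z\<in>unit_disc. g z = h (w z)))"

end

theory Submission
  imports Defs
begin

text \<open>Write \<open>v(z) = z p'(z)\<close>. The hypothesis says that
  \<open>\<alpha>\<^sub>2 z v'(z) + (\<alpha>\<^sub>1 - \<alpha>\<^sub>2) v(z)\<close> is subordinate to \<open>(1 + Cz)/(1 + Dz) - 1\<close>, so by Schwarz's lemma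
  it is bounded by \<open>M |z|\<close> with \<open>M = (C - D)/(1 - |D|)\<close>. At a point where \<open>|v|\<close> attains its
  maximum over a closed disc, Jack's lemma gives \<open>Re (conj v \<cdot> z v') \<ge> 0\<close>, whence
  \<open>|v(z)| \<le> M |z| / (\<alpha>\<^sub>1 - \<alpha>\<^sub>2)\<close>. Thus \<open>|p'| \<le> M / (\<alpha>\<^sub>1 - \<alpha>\<^sub>2) \<le> 1/e\<close> by the hypothesis on the
  parameters, so \<open>|p - 1| \<le> 1/e\<close>, and then \<open>log p\<close> maps the disc into itself, i.e. \<open>p \<prec> exp\<close>.\<close>

lemma Re_cnj_mult_deriv_nonneg_if_max_on_segment:
  fixes v :: "complex \<Rightarrow> complex"
  assumes hol: "v holomorphic_on ball 0 1" and z0: "norm z0 < 1"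
    and max: "\<And>t::real. 0 \<le> t \<Longrightarrow> t \<le> 1 \<Longrightarrow> norm (v (of_real t * z0)) \<le> norm (v z0)"
  shows "Re (cnj (v z0) * deriv v z0 * z0) \<ge> 0"
proof (rule ccontr)
  assume neg: "\<not> ?thesis"
  define c where "c = cnj (v z0)"
  define h where "h = (\<lambda>t::real. Re (c * v (of_real t * z0)))"
  have dv: "(v has_field_derivative deriv v z0) (at z0)"
    using hol z0 by (simp add: DERIV_deriv_iff_field_differentiable holomorphic_on_imp_differentiable_at)
  have d1: "((\<lambda>s. c * v (s * z0)) has_field_derivative c * (deriv v z0 * z0)) (at (of_real 1))"
  proof -
    have "((\<lambda>s. s * z0) has_field_derivative z0) (at 1)"
      by (rule derivative_eq_intros refl | simp)+
    hence "((\<lambda>s. v (s * z0)) has_field_derivative deriv v z0 * z0) (at 1)"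
      using DERIV_chain[of v "deriv v z0" "\<lambda>s. s * z0" 1] dv by (auto simp: o_def)
    thus ?thesis by (auto intro: DERIV_cmult)
  qed
  have "(h has_real_derivative Re (c * (deriv v z0 * z0))) (at 1)"
    unfolding h_def using has_field_derivative_Re[OF has_vector_derivative_real_field[OF d1]] by simp
  moreover have "Re (c * (deriv v z0 * z0)) < 0" using neg by (simp add: c_def mult.assoc)
  ultimately obtain d where d: "d > 0" "\<forall>e>0. e < d \<longrightarrow> h 1 < h (1 - e)"
    using DERIV_neg_dec_left by blast
  define e where "e = min (d/2) (1/2)"
  have "h 1 < h (1 - e)" using d e_def by auto
  moreover have "h (1 - e) \<le> norm c * norm (v (of_real (1 - e) * z0))"
    unfolding h_def by (metis complex_Re_le_cmod norm_mult)
  moreover have "norm (v (of_real (1 - e) * z0)) \<le> norm (v z0)"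
    using max[of "1 - e"] d(1) unfolding e_def by (simp add: min_def)
  moreover have "h 1 = norm (v z0) ^ 2"
    unfolding h_def c_def using cmod_power2[of "v z0"] by (simp add: power2_eq_square)
  ultimately show False
    by (smt (verit, best) c_def complex_mod_cnj mult_left_mono norm_ge_zero power2_eq_square)
qed

lemma norm_le_if_first_order_differential_bound:
  fixes v :: "complex \<Rightarrow> complex" and a b M :: real
  assumes hol: "v holomorphic_on ball 0 1" and a: "a > 0" and b: "b > 0" and M: "M \<ge> 0"
    and bound: "\<And>z. norm z < 1 \<Longrightarrow> norm (of_real a * z * deriv v z + of_real b * v z) \<le> M * norm z"
    and z: "norm z < 1"
  shows "norm (v z) \<le> M / b * norm z"
proof -
  define r where "r = norm z"
  have "cball 0 r \<subseteq> ball 0 1" using z r_def by auto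
  hence "continuous_on (cball 0 r) (\<lambda>y. norm (v y))"
    using holomorphic_on_imp_continuous_on[OF holomorphic_on_subset[OF hol]]
    by (intro continuous_intros)
  then obtain z0 where z0: "norm z0 \<le> r" and max: "\<And>y. norm y \<le> r \<Longrightarrow> norm (v y) \<le> norm (v z0)"
    using continuous_attains_sup[of "cball 0 r" "\<lambda>y. norm (v y)"] r_def
    by (metis compact_cball cball_eq_empty mem_cball_0 norm_ge_zero not_less)
  have z0_disc: "norm z0 < 1" using z0 z r_def by simp
  have jack: "Re (cnj (v z0) * deriv v z0 * z0) \<ge> 0"
  proof (rule Re_cnj_mult_deriv_nonneg_if_max_on_segment[OF hol z0_disc])
    fix t :: real assume "0 \<le> t" "t \<le> 1"
    hence "norm (of_real t * z0) \<le> r" using z0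
      by (simp add: norm_mult) (metis mult_left_le_one_le norm_ge_zero order_trans)
    thus "norm (v (of_real t * z0)) \<le> norm (v z0)" using max by simp
  qed
  define c where "c = cnj (v z0)"
  define L where "L = of_real a * z0 * deriv v z0 + of_real b * v z0"
  have "Re (c * L) = a * Re (cnj (v z0) * deriv v z0 * z0) + b * norm (v z0) ^ 2"
  proof -
    have "c * L = of_real a * (cnj (v z0) * deriv v z0 * z0) + of_real b * (c * v z0)"
      by (simp add: c_def L_def algebra_simps)
    thus ?thesis using cmod_power2[of "v z0"] by (simp add: c_def power2_eq_square)
  qed
  hence "b * norm (v z0) ^ 2 \<le> Re (c * L)"
    using jack a by simp
  also have "\<dots> \<le> norm (v z0) * norm L"
    by (metis c_def complex_Re_le_cmod complex_mod_cnj norm_mult)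
  also have "\<dots> \<le> norm (v z0) * (M * r)"
    using bound[OF z0_disc] z0 M unfolding L_def
    by (meson mult_left_mono norm_ge_zero order_trans)
  finally have "b * norm (v z0) ^ 2 \<le> norm (v z0) * (M * r)" .
  hence "b * norm (v z0) \<le> M * r"
    using M r_def by (cases "v z0 = 0") (auto simp: power2_eq_square)
  hence "norm (v z0) \<le> M * r / b" using b by (simp add: field_simps)
  moreover have "norm (v z) \<le> norm (v z0)" using max r_def by simp
  ultimately show ?thesis by (simp add: r_def)
qed

lemma norm_le_if_mult_norm_le:
  fixes f :: "complex \<Rightarrow> complex"
  assumes hol: "f holomorphic_on ball 0 1"
    and bound: "\<And>z. norm z < 1 \<Longrightarrow> norm (z * f z) \<le> K * norm z" and z: "norm z < 1"
  shows "norm (f z) \<le> K"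
proof -
  have off_zero: "norm (f y) \<le> K" if "y \<noteq> 0" "norm y < 1" for y
    using bound[OF that(2)] that(1) by (simp add: norm_mult)
  show ?thesis
  proof (cases "z = 0")
    case True
    have "(f \<longlongrightarrow> f 0) (at 0)"
      using continuous_on_interior[OF holomorphic_on_imp_continuous_on[OF hol], of 0]
      by (simp add: isCont_def)
    moreover have "eventually (\<lambda>y. norm (f y) \<le> K) (at (0::complex))"
      unfolding eventually_at using off_zero by (intro exI[of _ 1]) auto
    ultimately show ?thesis using Lim_norm_ubound[of "at 0" f "f 0" K] True by simp
  qed (use off_zero z in auto)
qed

lemma norm_sub_one_le_if_subordinate_Janowski:
  fixes C D :: real and g :: "complex \<Rightarrow> complex"
  assumes D: "\<bar>D\<bar> < 1" and sub: "g \<prec>\<^sub>s (\<lambda>z. (1 + of_real C * z) / (1 + of_real D * z))"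
    and z: "norm z < 1"
  shows "norm (g z - 1) \<le> \<bar>C - D\<bar> / (1 - \<bar>D\<bar>) * norm z"
proof -
  obtain w where hol: "w holomorphic_on ball 0 1" and w_disc: "w ` ball 0 1 \<subseteq> ball 0 1"
    and w0: "w 0 = 0" and gw: "g z = (1 + of_real C * w z) / (1 + of_real D * w z)"
    using sub z unfolding subordinate_def unit_disc_def by auto
  have wz: "norm (w z) \<le> norm z"
    using Schwarz_Lemma(1)[OF hol w0 _ z] w_disc by fastforce
  have "norm (of_real D * w z) \<le> \<bar>D\<bar>"
    using wz z by (simp add: norm_mult mult_left_le)
  hence den: "norm (1 + of_real D * w z) \<ge> 1 - \<bar>D\<bar>"
    using norm_triangle_ineq2[of 1 "- (of_real D * w z)"] by (simp add: norm_minus_commute)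
  hence "1 + of_real D * w z \<noteq> 0" using D by auto
  hence "g z - 1 = of_real (C - D) * w z / (1 + of_real D * w z)"
    by (simp add: gw field_simps)
  hence "norm (g z - 1) = \<bar>C - D\<bar> * norm (w z) / norm (1 + of_real D * w z)"
    by (simp add: norm_mult norm_divide del: of_real_diff)
  also have "\<dots> \<le> \<bar>C - D\<bar> * norm z / (1 - \<bar>D\<bar>)"
    using D wz den by (intro frac_le) (auto intro: mult_left_mono)
  finally show ?thesis by simp
qed

lemma second_order_operator_eq_first_order:
  fixes p :: "complex \<Rightarrow> complex"
  assumes "p holomorphic_on S" "open S" "z \<in> S"
  shows "of_real a * z * deriv p z + of_real b * z\<^sup>2 * deriv (deriv p) z
         = of_real b * z * deriv (\<lambda>z. z * deriv p z) z + of_real (a - b) * (z * deriv p z)"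
proof -
  have "(deriv p has_field_derivative deriv (deriv p) z) (at z)"
    using assms holomorphic_deriv holomorphic_on_imp_differentiable_at
    by (metis DERIV_deriv_iff_field_differentiable)
  from DERIV_mult[OF DERIV_ident this]
  have "deriv (\<lambda>z. z * deriv p z) z = deriv p z + z * deriv (deriv p) z"
    by (auto dest!: DERIV_imp_deriv simp: algebra_simps)
  thus ?thesis by (simp add: algebra_simps power2_eq_square)
qed

lemma norm_Ln_one_plus_lt_one:
  fixes u :: complex
  assumes "norm u \<le> exp (-1)"
  shows "norm (Ln (1 + u)) < 1"
proof -
  have "exp (-1::real) < 1/2"
    using exp_less_mono[OF ln_2_less_1] by (simp add: exp_minus field_simps)
  hence x: "norm u < 1/2" using assms by linarith
  have "norm (Ln (1 + u) - u) \<le> norm u ^ 2 / (1 - norm u)"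
    using Ln_approx_linear[of u] x by simp
  hence "norm (Ln (1 + u)) \<le> norm u + norm u ^ 2 / (1 - norm u)"
    using norm_triangle_ineq2[of "Ln (1 + u)" u] by linarith
  also have "\<dots> = norm u / (1 - norm u)" using x by (simp add: field_simps power2_eq_square)
  also have "\<dots> < 1" using x by (simp add: field_simps)
  finally show ?thesis .
qed

lemma subordinate_exp_if_norm_sub_one_le:
  fixes p :: "complex \<Rightarrow> complex"
  assumes hol: "p holomorphic_on ball 0 1" and p0: "p 0 = 1"
    and bound: "\<And>z. norm z < 1 \<Longrightarrow> norm (p z - 1) \<le> exp (-1)"
  shows "p \<prec>\<^sub>s exp"
  unfolding subordinate_def unit_disc_def
proof (intro exI[of _ "\<lambda>z. Ln (p z)"] conjI ballI)
  have Re_pos: "Re (p z) > 0" if "z \<in> ball 0 1" for z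
  proof -
    have "norm (p z - 1) \<le> exp (-1)" using bound that by simp
    moreover have "exp (-1::real) < 1" by simp
    ultimately have "norm (1 - p z) < 1"
      by (metis norm_minus_commute order.strict_trans1)
    thus ?thesis using complex_Re_le_cmod[of "1 - p z"] by simp
  qed
  have "p z \<notin> \<real>\<^sub>\<le>\<^sub>0" if "z \<in> ball 0 1" for z
    using Re_pos[OF that] by (auto simp: complex_nonpos_Reals_iff)
  thus "(\<lambda>z. Ln (p z)) holomorphic_on ball 0 1"
    using hol by (intro holomorphic_on_Ln') auto
  show "(\<lambda>z. Ln (p z)) ` ball 0 1 \<subseteq> ball 0 1"
    using norm_Ln_one_plus_lt_one[OF bound] by fastforce
  show "Ln (p 0) = 0" using p0 by simp
  show "p z = exp (Ln (p z))" if "z \<in> ball 0 1" for z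
  proof -
    have "p z \<noteq> 0" using Re_pos[OF that] by auto
    thus ?thesis by simp
  qed
qed

lemma norm_sub_at_zero_le_if_norm_deriv_le:
  fixes p :: "complex \<Rightarrow> complex"
  assumes hol: "p holomorphic_on ball 0 1"
    and bound: "\<And>z. norm z < 1 \<Longrightarrow> norm (deriv p z) \<le> K" and z: "norm z < 1"
  shows "norm (p z - p 0) \<le> K * norm z"
proof -
  have "norm (p z - p 0) \<le> K * norm (z - 0)"
  proof (rule field_differentiable_bound[where f'="deriv p" and S="ball 0 1"])
    show "(p has_field_derivative deriv p x) (at x within ball 0 1)" if "x \<in> ball 0 1" for x
      using hol that by (simp add: DERIV_deriv_iff_field_differentiable
          holomorphic_on_imp_differentiable_at has_field_derivative_at_within)
  qed (use z bound in auto)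
  thus ?thesis by simp
qed

lemma parameter_condition_imp_le_exp_minus_one:
  fixes C D \<alpha>1 \<alpha>2 :: real
  assumes D: "\<bar>D\<bar> < 1" and DC: "D < C"
    and cond: "(\<alpha>1 - \<alpha>2) * (1 - D\<^sup>2) \<ge> exp 1 * (C - D) * (1 + \<bar>D\<bar>)"
  shows "\<alpha>1 - \<alpha>2 > 0" and "(C - D) / (1 - \<bar>D\<bar>) / (\<alpha>1 - \<alpha>2) \<le> exp (-1)"
proof -
  have "(\<alpha>1 - \<alpha>2) * (1 - \<bar>D\<bar>) * (1 + \<bar>D\<bar>) \<ge> exp 1 * (C - D) * (1 + \<bar>D\<bar>)"
    using cond by (simp add: power2_eq_square abs_mult_self_eq algebra_simps)
  hence cond': "exp 1 * (C - D) \<le> (\<alpha>1 - \<alpha>2) * (1 - \<bar>D\<bar>)"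
    using D by (simp add: mult_le_cancel_right_pos)
  moreover have "exp 1 * (C - D) > 0" using DC by simp
  ultimately show \<alpha>: "\<alpha>1 - \<alpha>2 > 0"
    using D by (smt (verit) mult_nonpos_nonneg)
  have "C - D \<le> exp (-1) * ((\<alpha>1 - \<alpha>2) * (1 - \<bar>D\<bar>))"
    using cond' by (simp add: exp_minus field_simps)
  moreover have "(1 - \<bar>D\<bar>) * (\<alpha>1 - \<alpha>2) > 0" using \<alpha> D by simp
  ultimately show "(C - D) / (1 - \<bar>D\<bar>) / (\<alpha>1 - \<alpha>2) \<le> exp (-1)"
    by (simp add: pos_divide_le_eq mult.commute)
qed

theorem theorem4p1:
  fixes C D \<alpha>1 \<alpha>2 :: real and p :: "complex \<Rightarrow> complex"
  assumes "-1 < D" "D < C" "C \<le> 1"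
    and "\<alpha>1 > 0" "\<alpha>2 > 0"
    and "(\<alpha>1 - \<alpha>2) * (1 - D\<^sup>2) \<ge> exp 1 * (C - D) * (1 + \<bar>D\<bar>)"
    and "p holomorphic_on unit_disc" and "p 0 = 1"
    and "(\<lambda>z. 1 + of_real \<alpha>1 * z * deriv p z + of_real \<alpha>2 * z\<^sup>2 * deriv (deriv p) z)
           \<prec>\<^sub>s (\<lambda>z. (1 + of_real C * z) / (1 + of_real D * z))"
  shows "p \<prec>\<^sub>s exp"
proof -
  have hol: "p holomorphic_on ball 0 1" using assms(7) by (simp add: unit_disc_def)
  have D: "\<bar>D\<bar> < 1" using assms(1-3) by auto
  define M where "M = (C - D) / (1 - \<bar>D\<bar>)"
  define K where "K = M / (\<alpha>1 - \<alpha>2)"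
  note \<alpha> = parameter_condition_imp_le_exp_minus_one(1)[OF D assms(2,6)]
  have K: "K \<le> exp (-1)"
    using parameter_condition_imp_le_exp_minus_one(2)[OF D assms(2,6)] by (simp add: K_def M_def)
  have "norm (z * deriv p z) \<le> K * norm z" if "norm z < 1" for z
  proof (rule norm_le_if_first_order_differential_bound[of _ \<alpha>2 "\<alpha>1 - \<alpha>2" M, unfolded K_def[symmetric]])
    show "(\<lambda>z. z * deriv p z) holomorphic_on ball 0 1"
      using hol by (intro holomorphic_intros holomorphic_deriv) auto
    show "norm (of_real \<alpha>2 * y * deriv (\<lambda>z. z * deriv p z) y + of_real (\<alpha>1 - \<alpha>2) * (y * deriv p y))
          \<le> M * norm y" if "norm y < 1" for y
      using norm_sub_one_le_if_subordinate_Janowski[OF D assms(9) that] assms(2) that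
        second_order_operator_eq_first_order[OF hol, of y \<alpha>1 \<alpha>2]
      by (simp add: M_def)
  qed (use assms(5) assms(2) D \<alpha> that in \<open>auto simp: M_def\<close>)
  hence p': "norm (deriv p z) \<le> K" if "norm z < 1" for z
    using norm_le_if_mult_norm_le[OF holomorphic_deriv[OF hol] _ that] by simp
  have "norm (p z - 1) \<le> exp (-1)" if "norm z < 1" for z
  proof -
    have "0 \<le> K" using p'[of 0] by (simp add: order.trans[OF norm_ge_zero])
    hence "K * norm z \<le> K" using that by (simp add: mult_left_le)
    hence "K * norm z \<le> exp (-1)" using K by linarith
    thus ?thesis using norm_sub_at_zero_le_if_norm_deriv_le[OF hol p' that] assms(8) by simp
  qed
  thus ?thesis using subordinate_exp_if_norm_sub_one_le[OF hol assms(8)] by blast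
qed

end
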